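(* Let $i\in I$ and let $\xi\in\mathscr C$ satisfy $D_i^\#(\xi)=\xi$. Then $\xi$ is a $\mathbb C$-linear combination of elements of the form $f\otimes t_\beta+s_i(f)\otimes t_{s_i\beta}$ with $f\in\mathbb C(P)$, $\beta\in Q^\vee$.
   Context: $G$ is a simply connected simple algebraic group over $\mathbb C$ with maximal torus $H$, Weyl group $W$, weight lattice $P$, simple roots $\alpha_i$ and simple reflections $s_i$ ($i\in I$), coroot lattice $Q^\vee$ (on which $W$ acts). $\mathbb C(P)$ is the fraction field of the group algebra $\mathbb CP$ (basis $e^\lambda$), with $W$ acting by $w(e^\lambda)=e^{w\lambda}$. $\mathscr C=\mathbb C(P)\otimes\mathbb CQ^\vee$, with basis symbols $t_\beta$ ($\beta\in Q^\vee$), is the commutative algebra with $(f\otimes t_\beta)(g\otimes t_\gamma)=fg\otimes t_{\beta+\gamma}$. For $i\in I$, $D_i^\#$ is the $\mathbb C$-linear operator on $\mathscr C$ given by $$D_i^\#(f\otimes t_\beta)=\frac{f}{1-e^{\alpha_i}}\otimes t_\beta-\frac{e^{\alpha_i}s_i(f)}{1-e^{\alpha_i}}\otimes t_{s_i\beta}.$$ *)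

theory Defs
  imports Complex_Main "HOL-Library.Poly_Mapping" "HOL-Computational_Algebra.Fraction_Field"
begin

(* Index set I: a finite type 'i (a linear order on it is a harmless technical
   device needed for the integral-domain instance of the group algebra).
   Cartan matrix A, Kac convention:  A i j = <alpha_i^vee, alpha_j>.            *)

definition gen_cartan :: "('i::finite \<Rightarrow> 'i \<Rightarrow> int) \<Rightarrow> bool" where
  "gen_cartan A \<longleftrightarrow> (\<forall>i. A i i = 2) \<and> (\<forall>i j. i \<noteq> j \<longrightarrow> A i j \<le> 0)
     \<and> (\<forall>i j. A i j = 0 \<longleftrightarrow> A j i = 0)"

definition finite_type_cartan :: "('i::finite \<Rightarrow> 'i \<Rightarrow> int) \<Rightarrow> bool" where
  "finite_type_cartan A \<longleftrightarrow> gen_cartan A \<and>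
     (\<exists>d :: 'i \<Rightarrow> real. (\<forall>i. d i > 0) \<and> (\<forall>i j. d i * A i j = d j * A j i) \<and>
        (\<forall>x :: 'i \<Rightarrow> real. (\<exists>i. x i \<noteq> 0) \<longrightarrow> (\<Sum>i\<in>UNIV. \<Sum>j\<in>UNIV. x i * d i * A i j * x j) > 0))"

definition indecomposable_cartan :: "('i::finite \<Rightarrow> 'i \<Rightarrow> int) \<Rightarrow> bool" where
  "indecomposable_cartan A \<longleftrightarrow>
     \<not> (\<exists>J K. J \<noteq> {} \<and> K \<noteq> {} \<and> J \<inter> K = {} \<and> J \<union> K = UNIV \<and>
            (\<forall>j\<in>J. \<forall>k\<in>K. A j k = 0))"

(* weight lattice P of simply connected G: coordinates w.r.t. fundamental weights *)
type_synonym 'i wt = "'i \<Rightarrow>\<^sub>0 int"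
(* coroot lattice Q^vee: coordinates w.r.t. simple coroots *)
type_synonym 'i cowt = "'i \<Rightarrow>\<^sub>0 int"
(* group algebra CP and its fraction field C(P) *)
type_synonym 'i grp = "'i wt \<Rightarrow>\<^sub>0 complex"
type_synonym 'i CP = "'i grp fract"
(* the algebra  C(P) \<otimes> CQ^vee  = finitely supported  Q^vee \<rightarrow> C(P);
   f \<otimes> t_beta  is  Poly_Mapping.single beta f *)
type_synonym 'i Cs = "'i cowt \<Rightarrow>\<^sub>0 'i CP"

(* simple root alpha_i = sum_j <alpha_j^vee, alpha_i> omega_j *)
definition simple_root :: "('i::finite \<Rightarrow> 'i \<Rightarrow> int) \<Rightarrow> 'i \<Rightarrow> 'i wt" where
  "simple_root A i = (\<Sum>j\<in>UNIV. Poly_Mapping.single j (A j i))"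

(* s_i lambda = lambda - <lambda, alpha_i^vee> alpha_i *)
definition s_wt :: "('i::finite \<Rightarrow> 'i \<Rightarrow> int) \<Rightarrow> 'i \<Rightarrow> 'i wt \<Rightarrow> 'i wt" where
  "s_wt A i lam = lam - (\<Sum>j\<in>UNIV. Poly_Mapping.single j (Poly_Mapping.lookup lam i * A j i))"

(* s_i beta = beta - <alpha_i, beta> alpha_i^vee *)
definition s_cowt :: "('i::finite \<Rightarrow> 'i \<Rightarrow> int) \<Rightarrow> 'i \<Rightarrow> 'i cowt \<Rightarrow> 'i cowt" where
  "s_cowt A i beta = beta - Poly_Mapping.single i (\<Sum>j\<in>UNIV. Poly_Mapping.lookup beta j * A j i)"

definition ex :: "'i::linorder wt \<Rightarrow> 'i CP" where
  "ex lam = Fract (Poly_Mapping.single lam 1) 1"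

definition cst :: "complex \<Rightarrow> 'i::linorder CP" where
  "cst c = Fract (Poly_Mapping.single 0 c) 1"

definition s_grp :: "('i::{finite,linorder} \<Rightarrow> 'i \<Rightarrow> int) \<Rightarrow> 'i \<Rightarrow> 'i grp \<Rightarrow> 'i grp" where
  "s_grp A i p = (\<Sum>lam\<in>Poly_Mapping.keys p. Poly_Mapping.single (s_wt A i lam) (Poly_Mapping.lookup p lam))"

definition s_CP :: "('i::{finite,linorder} \<Rightarrow> 'i \<Rightarrow> int) \<Rightarrow> 'i \<Rightarrow> 'i CP \<Rightarrow> 'i CP" where
  "s_CP A i f = (THE g. \<forall>a b. b \<noteq> 0 \<longrightarrow> f = Fract a b \<longrightarrow> g = Fract (s_grp A i a) (s_grp A i b))"

definition Dsharp :: "('i::{finite,linorder} \<Rightarrow> 'i \<Rightarrow> int) \<Rightarrow> 'i \<Rightarrow> 'i Cs \<Rightarrow> 'i Cs" where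
  "Dsharp A i xi = (\<Sum>beta\<in>Poly_Mapping.keys xi.
      Poly_Mapping.single beta (Poly_Mapping.lookup xi beta / (1 - ex (simple_root A i)))
    - Poly_Mapping.single (s_cowt A i beta)
        (ex (simple_root A i) * s_CP A i (Poly_Mapping.lookup xi beta) / (1 - ex (simple_root A i))))"

end

theory Submission
  imports Defs
begin

text \<open>Write \<open>a = e^alpha_i\<close> and \<open>\<tau>\<close> for the twist \<open>f \<otimes> t_\<beta> \<mapsto> s_i(f) \<otimes> t_(s_i \<beta>)\<close>;
  then \<open>D_i^# = (1 - a \<tau>) / (1 - a)\<close>. Since \<open>a \<noteq> 0, 1\<close>, a fixed point \<open>\<xi>\<close> of \<open>D_i^#\<close>
  satisfies \<open>\<tau> \<xi> = \<xi>\<close>, so \<open>\<xi> = (\<xi> + \<tau> \<xi>) / 2\<close> is half the sum of the elements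
  \<open>f_\<beta> \<otimes> t_\<beta> + s_i(f_\<beta>) \<otimes> t_(s_i \<beta>)\<close> over the coefficients \<open>f_\<beta>\<close> of \<open>\<xi>\<close>.\<close>

definition twist :: "('i::{finite,linorder} \<Rightarrow> 'i \<Rightarrow> int) \<Rightarrow> 'i \<Rightarrow> 'i Cs \<Rightarrow> 'i Cs" where
  "twist A i xi = (\<Sum>b\<in>Poly_Mapping.keys xi.
      Poly_Mapping.single (s_cowt A i b) (s_CP A i (Poly_Mapping.lookup xi b)))"

lemma s_cowt_involutive:
  fixes A :: "'i::finite \<Rightarrow> 'i \<Rightarrow> int"
  assumes "A i i = 2"
  shows "s_cowt A i (s_cowt A i b) = b"
proof -
  define c where "c = (\<Sum>j\<in>UNIV. Poly_Mapping.lookup b j * A j i)"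
  have sb: "s_cowt A i b = b - Poly_Mapping.single i c" by (simp add: s_cowt_def c_def)
  have "(\<Sum>j\<in>UNIV. Poly_Mapping.lookup (s_cowt A i b) j * A j i)
      = (\<Sum>j\<in>UNIV. Poly_Mapping.lookup b j * A j i - (if j = i then c * A i i else 0))"
    unfolding sb
    by (rule sum.cong) (auto simp: lookup_minus lookup_single when_def left_diff_distrib)
  also have "\<dots> = - c" using assms by (simp add: sum_subtractf c_def)
  finally have "s_cowt A i (s_cowt A i b) = s_cowt A i b + Poly_Mapping.single i c"
    by (simp add: s_cowt_def[of A i "s_cowt A i b"] single_uminus)
  then show ?thesis by (simp add: sb)
qed

lemma lookup_sum_single_involution:
  assumes "finite K" and "\<And>b. s (s b) = b"
  shows "Poly_Mapping.lookup (\<Sum>b\<in>K. Poly_Mapping.single (s b) (h b)) g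
      = (if s g \<in> K then h (s g) else 0)"
proof -
  have "Poly_Mapping.lookup (\<Sum>b\<in>K. Poly_Mapping.single (s b) (h b)) g
      = (\<Sum>b\<in>K. if b = s g then h b else 0)"
    unfolding lookup_sum lookup_single when_def by (rule sum.cong) (metis assms(2))+
  then show ?thesis using assms(1) by simp
qed

lemma lookup_twist:
  assumes "A i i = 2"
  shows "Poly_Mapping.lookup (twist A i xi) g
      = (if s_cowt A i g \<in> Poly_Mapping.keys xi
         then s_CP A i (Poly_Mapping.lookup xi (s_cowt A i g)) else 0)"
  unfolding twist_def
  by (rule lookup_sum_single_involution) (simp_all add: assms s_cowt_involutive)

lemma lookup_Dsharp:
  assumes "A i i = 2"
  shows "Poly_Mapping.lookup (Dsharp A i xi) g
      = (Poly_Mapping.lookup xi g - ex (simple_root A i) * Poly_Mapping.lookup (twist A i xi) g)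
        / (1 - ex (simple_root A i))"
proof -
  let ?a = "ex (simple_root A i)" and ?K = "Poly_Mapping.keys xi" and ?s = "s_cowt A i"
  have "Dsharp A i xi = (\<Sum>b\<in>?K. Poly_Mapping.single b (Poly_Mapping.lookup xi b / (1 - ?a)))
      - (\<Sum>b\<in>?K. Poly_Mapping.single (?s b) (?a * s_CP A i (Poly_Mapping.lookup xi b) / (1 - ?a)))"
    unfolding Dsharp_def by (simp add: sum_subtractf)
  moreover have "Poly_Mapping.lookup
      (\<Sum>b\<in>?K. Poly_Mapping.single b (Poly_Mapping.lookup xi b / (1 - ?a))) g
      = Poly_Mapping.lookup xi g / (1 - ?a)"
    by (simp add: lookup_sum lookup_single when_def in_keys_iff)
  moreover have "Poly_Mapping.lookup
      (\<Sum>b\<in>?K. Poly_Mapping.single (?s b) (?a * s_CP A i (Poly_Mapping.lookup xi b) / (1 - ?a))) g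
      = ?a * Poly_Mapping.lookup (twist A i xi) g / (1 - ?a)"
    by (simp add: assms lookup_sum_single_involution s_cowt_involutive lookup_twist)
  ultimately show ?thesis by (simp add: lookup_minus diff_divide_distrib)
qed

lemma ex_nonzero: "ex lam \<noteq> (0 :: 'i::linorder CP)"
proof -
  have "Poly_Mapping.single lam (1::complex) \<noteq> 0"
    by (metis lookup_single_eq lookup_zero one_neq_zero)
  then show ?thesis by (simp add: ex_def Zero_fract_def eq_fract)
qed

lemma ex_eq_1_iff: "ex lam = (1 :: 'i::linorder CP) \<longleftrightarrow> lam = 0"
proof -
  have "ex lam = 1 \<longleftrightarrow> Poly_Mapping.single lam (1::complex) = Poly_Mapping.single 0 1"
    by (simp add: ex_def One_fract_def eq_fract)
  also have "\<dots> \<longleftrightarrow> lam = 0" by (metis lookup_single_eq lookup_single_not_eq zero_neq_one)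
  finally show ?thesis .
qed

lemma simple_root_nonzero:
  assumes "A i i = 2"
  shows "simple_root A i \<noteq> 0"
proof
  assume "simple_root A i = 0"
  then have "Poly_Mapping.lookup (simple_root A i) i = 0" by simp
  moreover have "Poly_Mapping.lookup (simple_root A i) i = A i i"
    by (simp add: simple_root_def lookup_sum lookup_single when_def)
  ultimately show False using assms by simp
qed

lemma twist_eq_if_Dsharp_fixed:
  assumes "A i i = 2" and "Dsharp A i xi = xi"
  shows "twist A i xi = xi"
proof (rule poly_mapping_eqI)
  fix g
  let ?a = "ex (simple_root A i)"
    and ?x = "Poly_Mapping.lookup xi g" and ?t = "Poly_Mapping.lookup (twist A i xi) g"
  have "?a \<noteq> 0" "1 - ?a \<noteq> 0"
    using ex_nonzero ex_eq_1_iff simple_root_nonzero[of A i] assms(1) by auto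
  moreover have "?x = (?x - ?a * ?t) / (1 - ?a)"
    using lookup_Dsharp[of A i xi g] assms by simp
  ultimately show "?t = ?x" by (simp add: field_simps)
qed

lemma single_cst_half_double:
  "Poly_Mapping.single 0 (cst (1/2)) + Poly_Mapping.single 0 (cst (1/2)) = (1 :: 'i::linorder Cs)"
proof -
  have "cst (1/2) + cst (1/2) = (1 :: 'i CP)"
    by (simp add: cst_def single_add[symmetric] One_fract_def)
  then show ?thesis by (simp flip: single_add)
qed

lemma twist_fixed_eq_sum_half_orbit_sums:
  assumes "twist A i xi = xi"
  shows "xi = (\<Sum>b\<in>Poly_Mapping.keys xi. Poly_Mapping.single 0 (cst (1/2)) *
                (Poly_Mapping.single b (Poly_Mapping.lookup xi b)
                 + Poly_Mapping.single (s_cowt A i b) (s_CP A i (Poly_Mapping.lookup xi b))))"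
proof -
  have "xi = (\<Sum>b\<in>Poly_Mapping.keys xi. Poly_Mapping.single b (Poly_Mapping.lookup xi b))"
    by (rule poly_mapping_eqI) (simp add: lookup_sum lookup_single when_def in_keys_iff)
  then have "(\<Sum>b\<in>Poly_Mapping.keys xi. Poly_Mapping.single 0 (cst (1/2)) *
                (Poly_Mapping.single b (Poly_Mapping.lookup xi b)
                 + Poly_Mapping.single (s_cowt A i b) (s_CP A i (Poly_Mapping.lookup xi b))))
      = Poly_Mapping.single 0 (cst (1/2)) * (xi + twist A i xi)"
    by (simp add: sum_distrib_left[symmetric] sum.distrib twist_def)
  also have "\<dots> = (Poly_Mapping.single 0 (cst (1/2)) + Poly_Mapping.single 0 (cst (1/2))) * xi"
    using assms by (simp add: algebra_simps)
  finally show ?thesis by (simp add: single_cst_half_double)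
qed

theorem corollary2p4:
  fixes A :: "'i::{finite,linorder} \<Rightarrow> 'i \<Rightarrow> int" and i :: 'i and xi :: "'i Cs"
  assumes "finite_type_cartan A" and "indecomposable_cartan A"
    and "Dsharp A i xi = xi"
  shows "\<exists>(n::nat) (c :: nat \<Rightarrow> complex) (f :: nat \<Rightarrow> 'i CP) (b :: nat \<Rightarrow> 'i cowt).
           xi = (\<Sum>k<n. Poly_Mapping.single 0 (cst (c k)) *
                   (Poly_Mapping.single (b k) (f k)
                    + Poly_Mapping.single (s_cowt A i (b k)) (s_CP A i (f k))))"
proof -
  have "A i i = 2" using assms(1) by (simp add: finite_type_cartan_def gen_cartan_def)
  then have fixed: "twist A i xi = xi" using twist_eq_if_Dsharp_fixed[of A i xi] assms(3) by simp
  let ?K = "Poly_Mapping.keys xi"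
  obtain h where h: "bij_betw h {..<card ?K} ?K"
    using ex_bij_betw_nat_finite[of ?K] by (auto simp: atLeast0LessThan)
  let ?F = "\<lambda>b. Poly_Mapping.single 0 (cst (1/2)) *
                   (Poly_Mapping.single b (Poly_Mapping.lookup xi b)
                    + Poly_Mapping.single (s_cowt A i b) (s_CP A i (Poly_Mapping.lookup xi b)))"
  have "xi = (\<Sum>k<card ?K. ?F (h k))"
    using twist_fixed_eq_sum_half_orbit_sums[OF fixed] sum.reindex_bij_betw[OF h, of ?F] by simp
  then show ?thesis
    by (intro exI[of _ "card ?K"] exI[of _ "\<lambda>_. 1/2"]
        exI[of _ "\<lambda>k. Poly_Mapping.lookup xi (h k)"] exI[of _ h])
qed

end
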